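(* For real $p>0$, $$J_p^2:=\int_0^1 \frac{\ln^2(-\ln x)}{1+x^p}\,dx=\frac{1}{2p}\Big[\gamma^2+\frac{\pi^2}{6}+2\gamma \ln (2p)+\ln^2 (2p)\Big]\left[\psi\!\left(\tfrac{p+1}{2p}\right)-\psi\!\left(\tfrac{1}{2p}\right)\right]+\frac{\gamma+\ln (2p)}{p}\left[\gamma_1\!\left(\tfrac{1}{2p}\right)-\gamma_1\!\left(\tfrac{p+1}{2p}\right)\right]+\frac{1}{2p}\left[\gamma_2\!\left(\tfrac{1}{2p}\right)-\gamma_2\!\left(\tfrac{p+1}{2p}\right)\right],$$ and $\lim_{p\to\infty}J_p^2=\gamma^2+\zeta(2)$.
   Context: The Stieltjes constants $\gamma_k(a)$ are defined by the Laurent expansion of the Hurwitz zeta function $\zeta(s,a)=\frac{1}{s-1}+\sum_{n=0}^\infty \frac{(-1)^n}{n!}\gamma_n(a)(s-1)^n$ about $s=1$; $\gamma$ is Euler's constant, $\psi=\Gamma'/\Gamma$, and $\zeta$ is the Riemann zeta function. *)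

theory Defs
  imports "HOL-Analysis.Analysis"
begin

definition hurwitz_zeta :: "real \<Rightarrow> real \<Rightarrow> real" where
  "hurwitz_zeta s a = (\<Sum>k. (real k + a) powr (- s))"

text \<open>Stieltjes constants via the Laurent expansion at s = 1:
  zeta(s,a) - 1/(s-1) extends analytically to s = 1 and its n-th derivative there equals
  (-1)^n gamma_n(a).  We take the one-sided limit s -> 1+ of the n-th derivative of the
  regular part, computed on the half-line s > 1.\<close>
definition stieltjes :: "nat \<Rightarrow> real \<Rightarrow> real" where
  "stieltjes n a = (-1) ^ n *
     Lim (at_right 1) ((deriv ^^ n) (\<lambda>s. hurwitz_zeta s a - 1 / (s - 1)))"

definition J2 :: "real \<Rightarrow> real" where
  "J2 p = integral {0<..<1} (\<lambda>x. (ln (- ln x))\<^sup>2 / (1 + x powr p))"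

end

theory Submission
  imports Defs "HOL-Real_Asymp.Real_Asymp"
begin

(*
  Substituting x = exp (-t) turns J2 p into the integral of ln^2 t / (e^t (1 + e^(-p t))) over t > 0.
  Expanding 1 / (1 + e^(-p t)) geometrically and integrating termwise (dominated convergence) gives
  J2 p = sum_k (-1)^k L (1 + p k), where L c = (gamma^2 + pi^2/6 + 2 gamma ln c + ln^2 c) / c is the
  Laplace transform of ln^2 t; it comes from Gamma''(1) = gamma^2 + pi^2/6 by scaling t.
  Grouping the terms k = 2m and k = 2m + 1 gives L (2p (m + a)) - L (2p (m + b)) with a = 1/(2p) and
  b = (p+1)/(2p), i.e. a combination of ln^n (m+a) / (m+a) - ln^n (m+b) / (m+b) for n = 0, 1, 2.
  Summed over m these give gamma_n a - gamma_n b, by the classical formula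
  gamma_n a = lim_N (sum_{k<N} ln^n (k+a) / (k+a) - ln^(n+1) (N+1) / (n+1)), and gamma_0 = - psi.
  As p -> oo, dominated convergence in t leaves the integral of ln^2 t e^(-t) = gamma^2 + zeta 2.
*)

section \<open>Stieltjes constants as limits of sums\<close>

lemma ln_power_le_powr:
  fixes y :: real
  assumes "1 \<le> y"
  shows "ln y ^ j \<le> (4 * real j) ^ j * y powr (1/4)"
proof (cases "j = 0")
  case True
  then show ?thesis using assms by (simp add: ge_one_powr_ge_zero)
next
  case False
  have "ln y \<le> 4 * real j * y powr (1 / (4 * real j))"
    using ln_powr_bound[OF assms, of "1 / (4 * real j)"] False by (simp add: mult.commute)
  then have "ln y ^ j \<le> (4 * real j * y powr (1 / (4 * real j))) ^ j"
    using assms by (intro power_mono) auto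
  also have "\<dots> = (4 * real j) ^ j * y powr (1/4)"
    using assms False by (simp add: power_mult_distrib powr_power)
  finally show ?thesis .
qed

lemma ln_power_powr_lipschitz:
  obtains B :: real where "0 \<le> B"
    "\<And>k u v s. 1 \<le> k \<Longrightarrow> k \<le> u \<Longrightarrow> k \<le> v \<Longrightarrow> s \<in> {1/2..2} \<Longrightarrow>
      \<bar>ln u ^ j * u powr (- s) - ln v ^ j * v powr (- s)\<bar> \<le> B * k powr (-5/4) * \<bar>u - v\<bar>"
proof
  define B where "B = real j * (4 * real (j - 1)) ^ (j - 1) + 2 * (4 * real j) ^ j"
  show "0 \<le> B" by (simp add: B_def)
  fix k u v s :: real
  assume k: "1 \<le> k" "k \<le> u" "k \<le> v" and s: "s \<in> {1/2..2}"
  let ?\<phi>' = "\<lambda>y. (real j * ln y ^ (j - 1) - s * ln y ^ j) * y powr (- s - 1)"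
  have "norm ((\<lambda>y. ln y ^ j * y powr (- s)) u - (\<lambda>y. ln y ^ j * y powr (- s)) v)
      \<le> B * k powr (-5/4) * norm (u - v)"
  proof (rule field_differentiable_bound[of "{k..}"])
    fix y assume "y \<in> {k..}"
    then have ky: "k \<le> y" by simp
    then have y: "1 \<le> y" using k by simp
    have "y powr (- s - 1) = y powr (- s) / y"
      using y by (simp add: powr_diff)
    then show "((\<lambda>y. ln y ^ j * y powr (- s)) has_field_derivative ?\<phi>' y) (at y within {k..})"
      using y by (auto intro!: derivative_eq_intros simp: field_simps)
    have l: "0 \<le> ln y ^ (j - 1)" "0 \<le> ln y ^ j" using y by simp_all
    have "\<bar>real j * ln y ^ (j - 1) - s * ln y ^ j\<bar> \<le> real j * ln y ^ (j - 1) + 2 * ln y ^ j"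
    proof -
      have "0 \<le> s * ln y ^ j" "s * ln y ^ j \<le> 2 * ln y ^ j" "0 \<le> real j * ln y ^ (j - 1)"
        using l s by (auto intro: mult_right_mono)
      then show ?thesis by (simp only: abs_le_iff) linarith
    qed
    also have "\<dots> \<le> B * y powr (1/4)"
      using ln_power_le_powr[OF y, of "j - 1"] ln_power_le_powr[OF y, of j]
      by (auto simp: B_def algebra_simps intro!: add_mono mult_left_mono)
    finally have A: "\<bar>real j * ln y ^ (j - 1) - s * ln y ^ j\<bar> \<le> B * y powr (1/4)" .
    have "norm (?\<phi>' y) = \<bar>real j * ln y ^ (j - 1) - s * ln y ^ j\<bar> * y powr (- s - 1)"
      by (simp add: abs_mult)
    also have "\<dots> \<le> B * y powr (1/4) * y powr (-3/2)"
      using A y s by (intro mult_mono powr_mono) auto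
    also have "\<dots> = B * y powr (-5/4)"
      by (simp add: mult.assoc flip: powr_add)
    also have "\<dots> \<le> B * k powr (-5/4)"
      using ky k by (intro mult_left_mono powr_mono2') (auto simp: B_def)
    finally show "norm (?\<phi>' y) \<le> B * k powr (-5/4)" .
  qed (use k in auto)
  then show "\<bar>ln u ^ j * u powr (- s) - ln v ^ j * v powr (- s)\<bar> \<le> B * k powr (-5/4) * \<bar>u - v\<bar>"
    by simp
qed

(*
  (-1)^j hurwitz_reg a j is the j-th derivative of the regular part zeta(s,a) - 1/(s-1) on 1 < s < 2.
  The subtracted integrals telescope to the pole 1/(s-1) for j = 0 and make the terms O(k^(-5/4))
  uniformly in 1/2 <= s <= 2, so that the series can be differentiated termwise.
*)
definition hurwitz_reg_term :: "real \<Rightarrow> nat \<Rightarrow> real \<Rightarrow> nat \<Rightarrow> real" where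
  "hurwitz_reg_term a j s k = ln (real k + a) ^ j * (real k + a) powr (- s)
     - integral {real k + 1..real k + 2} (\<lambda>x. ln x ^ j * x powr (- s))"

definition hurwitz_reg :: "real \<Rightarrow> nat \<Rightarrow> real \<Rightarrow> real" where
  "hurwitz_reg a j s = (\<Sum>k. hurwitz_reg_term a j s k)"

lemma hurwitz_reg_term_eq_integral:
  "hurwitz_reg_term a j s k = integral {real k + 1..real k + 2}
     (\<lambda>x. ln (real k + a) ^ j * (real k + a) powr (- s) - ln x ^ j * x powr (- s))"
proof -
  have "(\<lambda>x. ln x ^ j * x powr (- s)) integrable_on {real k + 1..real k + 2}"
    by (rule integrable_continuous_interval) (auto intro!: continuous_intros)
  then show ?thesis
    unfolding hurwitz_reg_term_def by (subst integral_diff) auto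
qed

lemma hurwitz_reg_term_bound:
  assumes "a > 0"
  obtains B where
    "\<And>k s. 1 \<le> k \<Longrightarrow> s \<in> {1/2..2} \<Longrightarrow> \<bar>hurwitz_reg_term a j s k\<bar> \<le> B * real k powr (-5/4)"
proof -
  obtain L where L0: "0 \<le> L" and
    L: "\<And>k u v s :: real. 1 \<le> k \<Longrightarrow> k \<le> u \<Longrightarrow> k \<le> v \<Longrightarrow> s \<in> {1/2..2} \<Longrightarrow>
      \<bar>ln u ^ j * u powr (- s) - ln v ^ j * v powr (- s)\<bar> \<le> L * k powr (-5/4) * \<bar>u - v\<bar>"
    using ln_power_powr_lipschitz[where j=j] by blast
  have "\<bar>hurwitz_reg_term a j s k\<bar> \<le> L * (a + 2) * real k powr (-5/4)"
    if k: "1 \<le> k" and s: "s \<in> {1/2..2}" for k s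
  proof -
    have "norm (integral {real k + 1..real k + 2}
          (\<lambda>x. ln (real k + a) ^ j * (real k + a) powr (- s) - ln x ^ j * x powr (- s)))
        \<le> L * real k powr (-5/4) * (a + 2) * ((real k + 2) - (real k + 1))"
    proof (rule integral_bound)
      fix x assume x: "x \<in> {real k + 1..real k + 2}"
      have "\<bar>ln (real k + a) ^ j * (real k + a) powr (- s) - ln x ^ j * x powr (- s)\<bar>
          \<le> L * real k powr (-5/4) * \<bar>real k + a - x\<bar>"
        using k s x assms by (intro L) auto
      also have "\<dots> \<le> L * real k powr (-5/4) * (a + 2)"
        using L0 x assms by (intro mult_left_mono) auto
      finally show "norm (ln (real k + a) ^ j * (real k + a) powr (- s) - ln x ^ j * x powr (- s))
          \<le> L * real k powr (-5/4) * (a + 2)" by simp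
    next
      show "continuous_on {real k + 1..real k + 2}
          (\<lambda>x. ln (real k + a) ^ j * (real k + a) powr (- s) - ln x ^ j * x powr (- s))"
        by (intro continuous_intros) auto
    qed simp
    then show ?thesis
      by (simp add: hurwitz_reg_term_eq_integral mult_ac)
  qed
  then show ?thesis by (rule that)
qed

lemma hurwitz_reg_term_dominated:
  assumes "a > 0"
  obtains M where "summable M"
    "eventually (\<lambda>k. \<forall>s\<in>{1/2..2}. norm (hurwitz_reg_term a j s k) \<le> M k) sequentially"
proof -
  obtain B where
    B: "\<And>k s. 1 \<le> k \<Longrightarrow> s \<in> {1/2..2} \<Longrightarrow> \<bar>hurwitz_reg_term a j s k\<bar> \<le> B * real k powr (-5/4)"
    using hurwitz_reg_term_bound[OF assms, where j=j] by blast
  have "summable (\<lambda>k. B * real k powr (-5/4))"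
    by (intro summable_mult) (simp add: summable_real_powr_iff)
  moreover have
    "eventually (\<lambda>k. \<forall>s\<in>{1/2..2}. norm (hurwitz_reg_term a j s k) \<le> B * real k powr (-5/4)) sequentially"
    using eventually_ge_at_top[of "1::nat"] by eventually_elim (use B in auto)
  ultimately show ?thesis by (rule that)
qed

lemma summable_hurwitz_reg_term:
  assumes "a > 0" "s \<in> {1/2..2}"
  shows "summable (hurwitz_reg_term a j s)"
proof -
  obtain M where M: "summable M"
    "eventually (\<lambda>k. \<forall>s\<in>{1/2..2}. norm (hurwitz_reg_term a j s k) \<le> M k) sequentially"
    using hurwitz_reg_term_dominated[OF assms(1), where j=j] by blast
  from M(2) have "eventually (\<lambda>k. norm (hurwitz_reg_term a j s k) \<le> M k) sequentially"
    by eventually_elim (use assms(2) in blast)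
  then show ?thesis
    using M(1) by (rule summable_comparison_test_ev)
qed

lemma hurwitz_reg_uniform_limit:
  assumes "a > 0"
  shows "uniform_limit {1/2..2} (\<lambda>n s. \<Sum>k<n. hurwitz_reg_term a j s k) (hurwitz_reg a j) sequentially"
proof -
  obtain M where "summable M"
    "eventually (\<lambda>k. \<forall>s\<in>{1/2..2}. norm (hurwitz_reg_term a j s k) \<le> M k) sequentially"
    using hurwitz_reg_term_dominated[OF assms, where j=j] by blast
  then show ?thesis
    unfolding hurwitz_reg_def[abs_def] by (rule Weierstrass_m_test_ev[rotated])
qed

lemma hurwitz_reg_term_has_derivative:
  assumes "a > 0"
  shows "((\<lambda>s. hurwitz_reg_term a j s k) has_real_derivative - hurwitz_reg_term a (Suc j) s k) (at s)"
proof -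
  have integral_deriv: "((\<lambda>s. integral (cbox (real k + 1) (real k + 2)) (\<lambda>x. ln x ^ j * x powr (- s)))
      has_real_derivative integral (cbox (real k + 1) (real k + 2)) (\<lambda>x. - (ln x ^ Suc j * x powr (- s))))
      (at s within UNIV)"
  proof (rule leibniz_rule_field_derivative)
    fix s x :: real assume "x \<in> cbox (real k + 1) (real k + 2)"
    then show "((\<lambda>s. ln x ^ j * x powr (- s)) has_real_derivative - (ln x ^ Suc j * x powr (- s)))
        (at s within UNIV)"
      by (auto intro!: derivative_eq_intros simp: powr_def)
  next
    fix s :: real
    show "(\<lambda>x. ln x ^ j * x powr (- s)) integrable_on cbox (real k + 1) (real k + 2)"
      by (rule integrable_continuous) (auto intro!: continuous_intros)
  next
    show "continuous_on (UNIV \<times> cbox (real k + 1) (real k + 2))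
        (\<lambda>(s, x). - (ln x ^ Suc j * x powr (- s)))"
      by (auto intro!: continuous_intros simp: split_beta)
  qed auto
  have power_deriv: "((\<lambda>s. ln (real k + a) ^ j * (real k + a) powr (- s)) has_real_derivative
      - (ln (real k + a) ^ Suc j * (real k + a) powr (- s))) (at s)"
    using assms by (auto intro!: derivative_eq_intros simp: powr_def add_pos_nonneg)
  from DERIV_diff[OF power_deriv integral_deriv] show ?thesis
    unfolding hurwitz_reg_term_def by (simp add: integral_neg)
qed

lemma continuous_on_hurwitz_reg:
  assumes "a > 0"
  shows "continuous_on {1/2..2} (hurwitz_reg a j)"
proof (rule uniform_limit_theorem[OF _ hurwitz_reg_uniform_limit[OF assms]])
  have "continuous_on {1/2..2} (\<lambda>s. hurwitz_reg_term a j s k)" for k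
    by (rule DERIV_continuous_on)
      (rule has_field_derivative_at_within[OF hurwitz_reg_term_has_derivative[OF assms]])
  then show "\<forall>\<^sub>F n in sequentially. continuous_on {1/2..2} (\<lambda>s. \<Sum>k<n. hurwitz_reg_term a j s k)"
    by (intro always_eventually allI continuous_on_sum) auto
qed simp

lemma hurwitz_reg_has_derivative:
  assumes "a > 0" "s \<in> {1/2<..<2}"
  shows "(hurwitz_reg a j has_real_derivative - hurwitz_reg a (Suc j) s) (at s)"
proof -
  obtain M where M: "summable M"
    "eventually (\<lambda>k. \<forall>s\<in>{1/2..2}. norm (hurwitz_reg_term a (Suc j) s k) \<le> M k) sequentially"
    using hurwitz_reg_term_dominated[OF assms(1), where j="Suc j"] by blast
  have "((\<lambda>s. \<Sum>k. hurwitz_reg_term a j s k) has_real_derivative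
      (\<Sum>k. - hurwitz_reg_term a (Suc j) s k)) (at s)"
  proof (rule has_field_derivative_series'(2)[of "{1/2..2}" _ _ 1])
    show "uniformly_convergent_on {1/2..2} (\<lambda>n s. \<Sum>k<n. - hurwitz_reg_term a (Suc j) s k)"
      using M by (intro Weierstrass_m_test'_ev[of _ _ M]) auto
    show "summable (\<lambda>k. hurwitz_reg_term a j 1 k)"
      using assms(1) by (rule summable_hurwitz_reg_term) simp
    show "((\<lambda>s. hurwitz_reg_term a j s k) has_real_derivative - hurwitz_reg_term a (Suc j) s k)
        (at s within {1/2..2})" for k s
      by (rule has_field_derivative_at_within[OF hurwitz_reg_term_has_derivative[OF assms(1)]])
    show "s \<in> interior {1/2..2::real}"
      using assms(2) by simp
  qed simp_all
  moreover have "(\<Sum>k. - hurwitz_reg_term a (Suc j) s k) = - hurwitz_reg a (Suc j) s"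
    unfolding hurwitz_reg_def using assms by (intro suminf_minus summable_hurwitz_reg_term) auto
  ultimately show ?thesis
    unfolding hurwitz_reg_def[abs_def] by simp
qed

lemma hurwitz_zeta_minus_pole:
  assumes "a > 0" "s > 1"
  shows "hurwitz_zeta s a - 1 / (s - 1) = hurwitz_reg a 0 s"
proof -
  have "summable (\<lambda>k. real k powr (- s))"
    using assms by (simp add: summable_real_powr_iff)
  moreover have "\<forall>\<^sub>F k in sequentially. norm ((real k + a) powr (- s)) \<le> real k powr (- s)"
    using eventually_ge_at_top[of "1::nat"]
    by eventually_elim (use assms in \<open>auto intro!: powr_mono2'\<close>)
  ultimately have "summable (\<lambda>k. (real k + a) powr (- s))"
    by (rule summable_comparison_test_ev[rotated])
  then have zeta: "(\<lambda>k. (real k + a) powr (- s)) sums hurwitz_zeta s a"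
    unfolding hurwitz_zeta_def by (rule summable_sums)
  define T where "T k = (real k + 1) powr (1 - s) / (s - 1)" for k
  have "integral {real k + 1..real k + 2} (\<lambda>x. x powr (- s)) = T k - T (Suc k)" for k
  proof -
    have "((\<lambda>x. x powr (- s)) has_integral
        (real k + 2) powr (1 - s) / (1 - s) - (real k + 1) powr (1 - s) / (1 - s)) {real k + 1..real k + 2}"
    proof (rule fundamental_theorem_of_calculus)
      fix x assume "x \<in> {real k + 1..real k + 2}"
      then have "x > 0" by auto
      from DERIV_cdivide[OF has_real_derivative_powr[OF this, of "1 - s"], of "1 - s"]
      have "((\<lambda>x. x powr (1 - s) / (1 - s)) has_real_derivative x powr (- s)) (at x)"
        using assms by simp
      then show "((\<lambda>x. x powr (1 - s) / (1 - s)) has_vector_derivative x powr (- s))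
          (at x within {real k + 1..real k + 2})"
        unfolding has_real_derivative_iff_has_vector_derivative[symmetric]
        by (rule has_field_derivative_at_within)
    qed simp
    then show ?thesis
      using assms by (simp add: integral_unique T_def field_simps add.commute)
  qed
  then have "hurwitz_reg_term a 0 s = (\<lambda>k. (real k + a) powr (- s) - (T k - T (Suc k)))"
    by (simp add: hurwitz_reg_term_def fun_eq_iff)
  moreover have "T \<longlonglongrightarrow> 0"
    unfolding T_def using assms by real_asymp
  then have "(\<lambda>k. T k - T (Suc k)) sums (T 0 - 0)"
    by (rule telescope_sums')
  ultimately have "hurwitz_reg_term a 0 s sums (hurwitz_zeta s a - 1 / (s - 1))"
    using sums_diff[OF zeta] by (simp add: T_def)
  then show ?thesis
    by (simp add: hurwitz_reg_def sums_iff)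
qed

lemma higher_deriv_hurwitz_zeta_minus_pole:
  assumes "a > 0" "s \<in> {1<..<2}"
  shows "(deriv ^^ n) (\<lambda>s. hurwitz_zeta s a - 1 / (s - 1)) s = (-1) ^ n * hurwitz_reg a n s"
  using assms(2)
proof (induction n arbitrary: s)
  case 0
  then show ?case
    using assms(1) by (simp add: hurwitz_zeta_minus_pole)
next
  case (Suc n)
  have "((\<lambda>s. (-1) ^ n * hurwitz_reg a n s) has_real_derivative
      (-1) ^ Suc n * hurwitz_reg a (Suc n) s) (at s)"
    using DERIV_cmult[OF hurwitz_reg_has_derivative[OF assms(1), of s n], of "(-1) ^ n"] Suc.prems
    by simp
  then have "((deriv ^^ n) (\<lambda>s. hurwitz_zeta s a - 1 / (s - 1)) has_real_derivative
      (-1) ^ Suc n * hurwitz_reg a (Suc n) s) (at s)"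
    by (rule has_field_derivative_transform_within_open[where S = "{1<..<2}"])
      (use Suc in simp_all)
  then show ?case
    by (simp add: DERIV_imp_deriv)
qed

lemma stieltjes_eq_hurwitz_reg:
  assumes "a > 0"
  shows "stieltjes n a = hurwitz_reg a n 1"
proof -
  have "isCont (hurwitz_reg a n) 1"
    using continuous_on_hurwitz_reg[OF assms, of n]
    by (rule continuous_on_interior) simp
  then have lim: "((\<lambda>s. (-1) ^ n * hurwitz_reg a n s) \<longlongrightarrow> (-1) ^ n * hurwitz_reg a n 1) (at_right 1)"
    by (intro tendsto_mult tendsto_const) (simp add: isCont_def filterlim_at_split)
  have "eventually (\<lambda>s. s \<in> {1<..<2}) (at_right (1::real))"
    by (rule eventually_at_right_real) simp
  then have "eventually (\<lambda>s. (-1) ^ n * hurwitz_reg a n s =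
      (deriv ^^ n) (\<lambda>s. hurwitz_zeta s a - 1 / (s - 1)) s) (at_right 1)"
    by eventually_elim (simp add: higher_deriv_hurwitz_zeta_minus_pole[OF assms])
  with lim have "((deriv ^^ n) (\<lambda>s. hurwitz_zeta s a - 1 / (s - 1)) \<longlongrightarrow>
      (-1) ^ n * hurwitz_reg a n 1) (at_right 1)"
    by (rule Lim_transform_eventually)
  then have "Lim (at_right 1) ((deriv ^^ n) (\<lambda>s. hurwitz_zeta s a - 1 / (s - 1)))
      = (-1) ^ n * hurwitz_reg a n 1"
    by (rule tendsto_Lim[rotated]) simp
  then show ?thesis
    by (simp add: stieltjes_def)
qed

lemma hurwitz_reg_term_at_1:
  assumes "a > 0"
  shows "hurwitz_reg_term a n 1 k = ln (real k + a) ^ n / (real k + a)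
     - (ln (real (Suc k) + 1) ^ Suc n - ln (real k + 1) ^ Suc n) / real (Suc n)"
proof -
  have "((\<lambda>x. ln x ^ n * x powr (-1)) has_integral
      ln (real k + 2) ^ Suc n / real (Suc n) - ln (real k + 1) ^ Suc n / real (Suc n))
      {real k + 1..real k + 2}"
  proof (rule fundamental_theorem_of_calculus)
    fix x assume "x \<in> {real k + 1..real k + 2}"
    then have x: "x > 0" by auto
    from DERIV_cdivide[OF DERIV_power[OF DERIV_ln[OF x], of "Suc n"], of "real (Suc n)"]
    have "((\<lambda>x. ln x ^ Suc n / real (Suc n)) has_real_derivative ln x ^ n * x powr (-1)) (at x)"
      using x by (simp add: powr_minus_divide field_simps del: of_nat_Suc)
    then show "((\<lambda>x. ln x ^ Suc n / real (Suc n)) has_vector_derivative ln x ^ n * x powr (-1))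
        (at x within {real k + 1..real k + 2})"
      unfolding has_real_derivative_iff_has_vector_derivative[symmetric]
      by (rule has_field_derivative_at_within)
  qed simp
  moreover have "(real k + a) powr (-1) = 1 / (real k + a)"
    using assms by (simp add: powr_minus_divide)
  ultimately show ?thesis
    by (simp add: hurwitz_reg_term_def integral_unique diff_divide_distrib add.commute)
qed

lemma stieltjes_LIMSEQ:
  assumes "a > 0"
  shows "(\<lambda>N. (\<Sum>k<N. ln (real k + a) ^ n / (real k + a)) - ln (real N + 1) ^ Suc n / real (Suc n))
     \<longlonglongrightarrow> stieltjes n a"
proof -
  let ?F = "\<lambda>k. ln (real k + 1) ^ Suc n / real (Suc n)"
  have "(\<Sum>k<N. hurwitz_reg_term a n 1 k) = (\<Sum>k<N. ln (real k + a) ^ n / (real k + a)) - ?F N" for N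
  proof -
    have "(\<Sum>k<N. hurwitz_reg_term a n 1 k)
        = (\<Sum>k<N. ln (real k + a) ^ n / (real k + a)) - (\<Sum>k<N. ?F (Suc k) - ?F k)"
      by (simp add: hurwitz_reg_term_at_1[OF assms] sum_subtractf diff_divide_distrib)
    also have "(\<Sum>k<N. ?F (Suc k) - ?F k) = ?F N - ?F 0"
      by (rule sum_lessThan_telescope)
    finally show ?thesis
      by simp
  qed
  then have "(\<lambda>N. (\<Sum>k<N. ln (real k + a) ^ n / (real k + a)) - ?F N)
      = (\<lambda>N. \<Sum>k<N. hurwitz_reg_term a n 1 k)"
    by simp
  also have "\<dots> \<longlonglongrightarrow> hurwitz_reg a n 1"
    unfolding hurwitz_reg_def using assms by (intro summable_LIMSEQ summable_hurwitz_reg_term) auto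
  finally show ?thesis
    by (simp add: stieltjes_eq_hurwitz_reg[OF assms])
qed

lemma stieltjes_0:
  assumes "a > 0"
  shows "stieltjes 0 a = - Digamma a"
proof -
  have "(\<lambda>N. ((\<Sum>k<N. 1 / (real k + a)) - ln (real N + 1))
      + (ln (real N) - (\<Sum>k<N. inverse (a + real k)))) \<longlonglongrightarrow> stieltjes 0 a + Digamma a"
    using stieltjes_LIMSEQ[OF assms, of 0] Digamma_LIMSEQ[of a] assms by (intro tendsto_add) auto
  moreover have "(\<lambda>N. ln (real N) - ln (real N + 1)) \<longlonglongrightarrow> 0"
    by real_asymp
  ultimately have "stieltjes 0 a + Digamma a = 0"
    by (simp add: LIMSEQ_unique divide_inverse add.commute)
  then show ?thesis
    by simp
qed

lemma stieltjes_diff_sums: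
  assumes "a > 0" "b > 0"
  shows "(\<lambda>k. ln (real k + a) ^ n / (real k + a) - ln (real k + b) ^ n / (real k + b))
     sums (stieltjes n a - stieltjes n b)"
  using tendsto_diff[OF stieltjes_LIMSEQ[OF assms(1)] stieltjes_LIMSEQ[OF assms(2)], of n n]
  by (simp add: sums_def sum_subtractf)

section \<open>Logarithmic moments of the Gamma integral\<close>

lemma leibniz_rule_dominated:
  fixes f f' :: "real \<Rightarrow> real \<Rightarrow> real" and g :: "real \<Rightarrow> real"
  assumes U: "open U" "convex U" "s0 \<in> U"
    and der: "\<And>s t. s \<in> U \<Longrightarrow> t \<in> S \<Longrightarrow> ((\<lambda>s. f s t) has_real_derivative f' s t) (at s)"
    and int: "\<And>s. s \<in> U \<Longrightarrow> f s integrable_on S"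
    and bound: "\<And>s t. s \<in> U \<Longrightarrow> t \<in> S \<Longrightarrow> \<bar>f' s t\<bar> \<le> g t"
    and g: "g integrable_on S"
  shows "f' s0 integrable_on S"
    and "((\<lambda>s. integral S (f s)) has_real_derivative integral S (f' s0)) (at s0)"
proof -
  have quotient_limit:
    "f' s0 integrable_on S \<and>
     (\<lambda>n. (integral S (f (X n)) - integral S (f s0)) / (X n - s0)) \<longlonglongrightarrow> integral S (f' s0)"
    if X: "\<And>n. X n \<in> U - {s0}" "X \<longlonglongrightarrow> s0" for X
  proof -
    define q where "q n t = (f (X n) t - f s0 t) / (X n - s0)" for n t
    have "q n integrable_on S" for n
      unfolding q_def using X U by (intro integrable_on_divide integrable_diff int) auto
    moreover have "norm (q n t) \<le> g t" if t: "t \<in> S" for n t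
    proof -
      have "norm (f (X n) t - f s0 t) \<le> g t * norm (X n - s0)"
        by (rule field_differentiable_bound[OF U(2), of "\<lambda>s. f s t" "\<lambda>s. f' s t"])
          (use X U t in \<open>auto intro: has_field_derivative_at_within der bound\<close>)
      then show ?thesis
        using X(1)[of n] by (simp add: q_def divide_le_eq)
    qed
    moreover have "(\<lambda>n. q n t) \<longlonglongrightarrow> f' s0 t" if t: "t \<in> S" for t
    proof -
      have "((\<lambda>s. (f s t - f s0 t) / (s - s0)) \<longlongrightarrow> f' s0 t) (at s0)"
        using der[OF U(3) t] by (simp add: has_field_derivative_iff)
      then show ?thesis
        using X unfolding q_def tendsto_at_iff_sequentially o_def by auto
    qed
    ultimately have "f' s0 integrable_on S" "(\<lambda>n. integral S (q n)) \<longlonglongrightarrow> integral S (f' s0)"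
      using dominated_convergence[OF _ g] by blast+
    moreover have "integral S (q n) = (integral S (f (X n)) - integral S (f s0)) / (X n - s0)" for n
      unfolding q_def using X U by (simp add: int integral_diff)
    ultimately show ?thesis
      by simp
  qed
  obtain e where e: "e > 0" "ball s0 e \<subseteq> U"
    using U openE by blast
  define X where "X n = s0 + e / (real n + 2)" for n
  have "X \<longlonglongrightarrow> s0 + 0"
    unfolding X_def by (intro tendsto_add tendsto_const) real_asymp
  then have X_lim: "X \<longlonglongrightarrow> s0"
    by simp
  have X_mem: "X n \<in> U - {s0}" for n
  proof -
    have "0 < e / (real n + 2)" "e / (real n + 2) < e"
      using e by (auto simp: divide_less_eq)
    then show ?thesis
      using e by (auto simp: X_def dist_real_def subset_iff)
  qed
  show "f' s0 integrable_on S"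
    using quotient_limit[OF X_mem X_lim] by simp
  have "((\<lambda>s. (integral S (f s) - integral S (f s0)) / (s - s0)) \<longlongrightarrow> integral S (f' s0)) (at s0 within U)"
    unfolding tendsto_at_iff_sequentially o_def using quotient_limit by blast
  then show "((\<lambda>s. integral S (f s)) has_real_derivative integral S (f' s0)) (at s0)"
    using at_within_open[OF U(3,1)] by (simp add: has_field_derivative_iff)
qed

lemma Gamma_has_integral_greaterThan:
  fixes \<sigma> :: real
  assumes "\<sigma> > 0"
  shows "((\<lambda>t. t powr (\<sigma> - 1) / exp t) has_integral Gamma \<sigma>) {0<..}"
proof -
  have N1: "negligible {x \<in> {0..} - {0<..}. x powr (\<sigma> - 1) / exp x \<noteq> 0}"
    by (rule negligible_subset[of "{0}"]) auto
  have N2: "negligible {x \<in> {0<..} - {0..}. x powr (\<sigma> - 1) / exp x \<noteq> (0::real)}"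
    by (rule negligible_subset[of "{}"]) auto
  show ?thesis
    using has_integral_spike_set_eq[OF N1 N2] Gamma_integral_real[OF assms] by simp
qed

lemma abs_ln_power_powr_le:
  assumes t: "t > 0" and s: "s \<in> {3/4..5/4}"
  shows "\<bar>ln t ^ j * t powr (s - 1)\<bar> \<le> (4 * real j) ^ j * (t powr (-1/2) + t)"
proof (cases "t \<le> 1")
  case True
  have "\<bar>ln t ^ j\<bar> = ln (1 / t) ^ j"
    using t True by (simp add: ln_div power_abs abs_of_nonpos)
  also have "\<dots> \<le> (4 * real j) ^ j * t powr (-1/4)"
    using ln_power_le_powr[of "1 / t" j] t True by (simp add: powr_divide powr_minus_divide)
  finally have ln: "\<bar>ln t ^ j\<bar> \<le> (4 * real j) ^ j * t powr (-1/4)" .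
  have "t powr (s - 1) \<le> t powr (-1/4)"
    using t True s by (intro powr_mono') auto
  with ln have "\<bar>ln t ^ j * t powr (s - 1)\<bar> \<le> (4 * real j) ^ j * t powr (-1/4) * t powr (-1/4)"
    unfolding abs_mult by (intro mult_mono) auto
  also have "\<dots> = (4 * real j) ^ j * t powr (-1/2)"
    by (simp add: mult.assoc flip: powr_add)
  also have "\<dots> \<le> (4 * real j) ^ j * (t powr (-1/2) + t)"
    using t by (intro mult_left_mono) auto
  finally show ?thesis .
next
  case False
  have "\<bar>ln t ^ j * t powr (s - 1)\<bar> = ln t ^ j * t powr (s - 1)"
    using False by (simp add: abs_mult)
  also have "\<dots> \<le> (4 * real j) ^ j * t powr (1/4) * t powr (1/4)"
    using ln_power_le_powr[of t j] False s by (intro mult_mono powr_mono) auto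
  also have "\<dots> = (4 * real j) ^ j * t powr (1/2)"
    by (simp add: mult.assoc flip: powr_add)
  also have "\<dots> \<le> (4 * real j) ^ j * (t powr (-1/2) + t)"
    using False powr_mono[of "1/2" 1 t] by (intro mult_left_mono add_increasing) auto
  finally show ?thesis .
qed

lemma higher_deriv_Gamma_has_integral:
  fixes s :: real
  assumes "s \<in> {3/4<..<5/4}"
  shows "((\<lambda>t. ln t ^ j * t powr (s - 1) / exp t) has_integral (deriv ^^ j) Gamma s) {0<..}"
  using assms
proof (induction j arbitrary: s)
  case 0
  then show ?case
    using Gamma_has_integral_greaterThan[of s] by simp
next
  case (Suc j)
  let ?U = "{3/4<..<5/4::real}"
  let ?f = "\<lambda>j s t. ln t ^ j * t powr (s - 1) / exp t"
  let ?g = "\<lambda>t. (4 * real (Suc j)) ^ Suc j * (t powr (-1/2) + t) / exp t"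
  have "(\<lambda>t. (4 * real (Suc j)) ^ Suc j * (t powr (1/2 - 1) / exp t + t powr (2 - 1) / exp t))
      integrable_on {0<..}"
    using Gamma_has_integral_greaterThan[of "1/2"] Gamma_has_integral_greaterThan[of 2]
    by (intro integrable_on_mult_right integrable_add) auto
  then have g: "?g integrable_on {0<..}"
    by (rule integrable_eq) (simp add: add_divide_distrib ring_distribs)
  have der: "((\<lambda>s. ?f j s t) has_real_derivative ?f (Suc j) s t) (at s)"
    if "s \<in> ?U" "t \<in> {0<..}" for s t
    using that by (auto intro!: derivative_eq_intros simp: powr_def)
  have bound: "\<bar>?f (Suc j) s t\<bar> \<le> ?g t" if "s \<in> ?U" "t \<in> {0<..}" for s t
    using abs_ln_power_powr_le[of t s "Suc j"] that
    by (simp add: abs_divide divide_right_mono del: power_Suc)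
  have int: "?f j s integrable_on {0<..}" if "s \<in> ?U" for s
    using Suc.IH[OF that] by blast
  have deriv_integral:
      "((\<lambda>s. integral {0<..} (?f j s)) has_real_derivative integral {0<..} (?f (Suc j) s)) (at s)"
    and int': "?f (Suc j) s integrable_on {0<..}"
    using leibniz_rule_dominated[OF _ _ Suc.prems der int bound g] by auto
  from deriv_integral have "((deriv ^^ j) Gamma has_real_derivative integral {0<..} (?f (Suc j) s)) (at s)"
    by (rule has_field_derivative_transform_within_open[where S = ?U])
      (use Suc in \<open>auto intro: integral_unique\<close>)
  then have "(deriv ^^ Suc j) Gamma s = integral {0<..} (?f (Suc j) s)"
    by (simp add: DERIV_imp_deriv)
  then show ?case
    using int' by (simp add: has_integral_integral)
qed

lemma Polygamma_1_1: "Polygamma 1 (1::real) = pi\<^sup>2 / 6"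
proof -
  have "(\<lambda>k. inverse ((1 + of_nat k) ^ Suc 1)) sums ((-1) ^ Suc 1 * Polygamma 1 (1::real) / fact 1)"
    by (rule Polygamma_LIMSEQ) auto
  moreover have "inverse ((1 + of_nat n :: real) ^ Suc 1) = 1 / real ((n + 1)\<^sup>2)" for n
    by (simp add: inverse_eq_divide power2_eq_square algebra_simps)
  ultimately have "(\<lambda>n. 1 / real ((n + 1)\<^sup>2)) sums Polygamma 1 (1::real)"
    by simp
  from sums_unique2[OF this inverse_squares_sums] show ?thesis .
qed

lemma higher_deriv_Gamma_1:
  shows "(deriv ^^ 1) Gamma (1::real) = - euler_mascheroni"
    and "(deriv ^^ 2) Gamma (1::real) = euler_mascheroni\<^sup>2 + pi\<^sup>2 / 6"
proof -
  have pos: "x \<notin> \<int>\<^sub>\<le>\<^sub>0" if "x > 0" for x :: real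
    using that by (auto elim!: nonpos_Ints_cases)
  have deriv_Gamma: "deriv Gamma x = Gamma x * Digamma x" if "x > 0" for x :: real
    using pos[OF that] by (intro DERIV_imp_deriv has_field_derivative_Gamma)
  then show "(deriv ^^ 1) Gamma (1::real) = - euler_mascheroni"
    by simp
  have "eventually (\<lambda>x. x \<in> {0<..}) (nhds (1::real))"
    by (rule eventually_nhds_in_open) auto
  then have "eventually (\<lambda>x. deriv Gamma x = Gamma x * Digamma x) (nhds (1::real))"
    by eventually_elim (simp add: deriv_Gamma)
  then have "(deriv ^^ 2) Gamma (1::real) = deriv (\<lambda>x. Gamma x * Digamma x) 1"
    by (simp add: numeral_2_eq_2 deriv_cong_ev)
  also have "\<dots> = Gamma 1 * Digamma 1 * Digamma 1 + Polygamma 1 1 * Gamma (1::real)"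
    using pos[of 1]
    by (intro DERIV_imp_deriv DERIV_mult has_field_derivative_Gamma)
      (simp_all add: has_field_derivative_Polygamma[of 1 0, simplified])
  also have "\<dots> = euler_mascheroni\<^sup>2 + pi\<^sup>2 / 6"
    unfolding Polygamma_1_1 by (simp add: power2_eq_square)
  finally show "(deriv ^^ 2) Gamma (1::real) = euler_mascheroni\<^sup>2 + pi\<^sup>2 / 6" .
qed

lemma ln_power_exp_has_integral:
  "((\<lambda>t. ln t ^ j / exp t) has_integral (deriv ^^ j) Gamma (1::real)) {0<..}"
  using higher_deriv_Gamma_has_integral[of 1 j] by (rule has_integral_eq[rotated]) auto

lemma has_integral_substitution_nonneg:
  fixes f g g' :: "real \<Rightarrow> real"
  assumes "S \<in> sets lebesgue"
    and "\<And>x. x \<in> S \<Longrightarrow> (g has_real_derivative g' x) (at x within S)"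
    and "inj_on g S"
    and int: "((\<lambda>x. \<bar>g' x\<bar> * f (g x)) has_integral I) S"
    and nonneg: "\<And>x. x \<in> S \<Longrightarrow> 0 \<le> f (g x)"
  shows "(f has_integral I) (g ` S)"
proof -
  have "(\<lambda>x. \<bar>g' x\<bar> * f (g x)) absolutely_integrable_on S"
    using int nonneg by (intro nonnegative_absolutely_integrable_1) auto
  then have "f absolutely_integrable_on g ` S \<and> integral (g ` S) f = I"
    using int has_absolute_integral_change_of_variables_1'[OF assms(1-3)]
    by (auto simp: has_integral_iff)
  then show ?thesis
    using set_lebesgue_integral_eq_integral(1) by (auto simp: has_integral_iff)
qed

definition ln_sq_laplace :: "real \<Rightarrow> real" where
  "ln_sq_laplace c = (euler_mascheroni\<^sup>2 + pi\<^sup>2 / 6 + 2 * euler_mascheroni * ln c + (ln c)\<^sup>2) / c"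

lemma ln_sq_laplace_has_integral:
  assumes c: "c > 0"
  shows "((\<lambda>t. ln t ^ 2 / exp (c * t)) has_integral ln_sq_laplace c) {0<..}"
proof -
  have "((\<lambda>u. (1 / c) * (ln u ^ 2 / exp u - 2 * ln c * (ln u ^ 1 / exp u) + ln c ^ 2 * (ln u ^ 0 / exp u)))
      has_integral (1 / c) * ((deriv ^^ 2) Gamma 1 - 2 * ln c * (deriv ^^ 1) Gamma 1 + ln c ^ 2 * (deriv ^^ 0) Gamma 1))
      {0<..}"
    by (intro has_integral_mult_right has_integral_add has_integral_diff ln_power_exp_has_integral)
  also have "(1 / c) * ((deriv ^^ 2) Gamma 1 - 2 * ln c * (deriv ^^ 1) Gamma 1 + ln c ^ 2 * (deriv ^^ 0) Gamma 1)
      = ln_sq_laplace c"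
    unfolding higher_deriv_Gamma_1 by (simp add: ln_sq_laplace_def field_simps)
  finally have "((\<lambda>u. \<bar>1 / c\<bar> * (ln (u / c) ^ 2 / exp (c * (u / c)))) has_integral ln_sq_laplace c) {0<..}"
    by (rule has_integral_eq[rotated]) (use c in \<open>auto simp: ln_div power2_eq_square field_simps\<close>)
  then have "((\<lambda>t. ln t ^ 2 / exp (c * t)) has_integral ln_sq_laplace c) ((\<lambda>u. u / c) ` {0<..})"
    using c by (intro has_integral_substitution_nonneg) (auto intro!: derivative_eq_intros simp: inj_on_def)
  moreover have "(\<lambda>u. u / c) ` {0<..} = {0<..}"
    using c by (auto simp: image_iff intro!: bexI[of _ "_ * c"])
  ultimately show ?thesis
    by simp
qed

section \<open>The integral J2\<close>

definition J2_exp_integrand :: "real \<Rightarrow> real \<Rightarrow> real" where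
  "J2_exp_integrand p t = ln t ^ 2 / exp t / (1 + exp (- (p * t)))"

lemma abs_J2_exp_integrand_le: "\<bar>J2_exp_integrand p t\<bar> \<le> ln t ^ 2 / exp t"
proof -
  have "ln t ^ 2 / exp t * 1 \<le> ln t ^ 2 / exp t * (1 + exp (- (p * t)))"
    by (intro mult_left_mono) auto
  then show ?thesis
    by (simp add: J2_exp_integrand_def abs_divide divide_le_eq add_pos_nonneg)
qed

lemma J2_exp_integrand_has_integral: "(J2_exp_integrand p has_integral J2 p) {0<..}"
proof -
  let ?f = "\<lambda>x. (ln (- ln x))\<^sup>2 / (1 + x powr p)"
  have ln_sq: "(\<lambda>t::real. ln t ^ 2 / exp t) integrable_on {0<..}"
    using ln_power_exp_has_integral[of 2] by (rule has_integral_integrable)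
  have "1 + exp y \<noteq> 0" for y :: real
    using exp_gt_zero[of y] by linarith
  then have "J2_exp_integrand p \<in> borel_measurable (lebesgue_on {0<..})"
    unfolding J2_exp_integrand_def
    by (intro continuous_imp_measurable_on_sets_lebesgue continuous_intros) auto
  then have "J2_exp_integrand p integrable_on {0<..}"
    by (rule measurable_bounded_by_integrable_imp_integrable[OF _ ln_sq])
      (auto simp: abs_J2_exp_integrand_le)
  moreover have "\<bar>- exp (- t)\<bar> * ?f (exp (- t)) = J2_exp_integrand p t" for t
  proof -
    have "?f (exp (- t)) = ln t ^ 2 / (1 + exp (- (p * t)))"
      by (simp add: powr_def)
    then show ?thesis
      by (simp add: J2_exp_integrand_def exp_minus field_simps)
  qed
  ultimately have "((\<lambda>t. \<bar>- exp (- t)\<bar> * ?f (exp (- t))) has_integral integral {0<..} (J2_exp_integrand p))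
      {0<..}"
    by (simp add: has_integral_integral)
  then have "(?f has_integral integral {0<..} (J2_exp_integrand p)) ((\<lambda>t. exp (- t)) ` {0<..})"
    by (intro has_integral_substitution_nonneg) (auto intro!: derivative_eq_intros simp: inj_on_def)
  moreover have "(\<lambda>t. exp (- t)) ` {0<..} = {0<..<1::real}"
  proof
    show "{0<..<1} \<subseteq> (\<lambda>t. exp (- t)) ` {0::real<..}"
    proof
      fix x :: real assume "x \<in> {0<..<1}"
      then show "x \<in> (\<lambda>t. exp (- t)) ` {0<..}"
        by (intro image_eqI[of _ _ "- ln x"]) auto
    qed
  qed auto
  ultimately have "J2 p = integral {0<..} (J2_exp_integrand p)"
    by (simp add: J2_def integral_unique)
  then show ?thesis
    using \<open>J2_exp_integrand p integrable_on {0<..}\<close> by (simp add: has_integral_integral)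
qed

lemma abs_sum_neg_power_le_1:
  fixes r :: real
  assumes "0 \<le> r" "r \<le> 1"
  shows "\<bar>\<Sum>k<N. (- r) ^ k\<bar> \<le> 1"
proof -
  have "(\<Sum>k<N. (- r) ^ k) * (1 + r) = 1 - (- r) ^ N"
    using assms by (simp add: sum_gp_strict divide_simps)
  moreover have "\<bar>1 - (- r) ^ N\<bar> \<le> 1 + r"
  proof (cases N)
    case (Suc n)
    have "r ^ N \<le> r"
      using assms Suc by (simp add: mult_left_le power_le_one)
    moreover have "\<bar>(- r) ^ N\<bar> = r ^ N"
      using assms by (simp add: power_abs)
    ultimately have "\<bar>(- r) ^ N\<bar> \<le> r"
      by simp
    then show ?thesis
      by (simp only: abs_le_iff) linarith
  qed (use assms in simp)
  ultimately have "\<bar>\<Sum>k<N. (- r) ^ k\<bar> * (1 + r) \<le> 1 * (1 + r)"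
    using assms by (metis abs_mult abs_of_nonneg add_nonneg_nonneg mult_1 zero_le_one)
  then show ?thesis
    by (rule mult_right_le_imp_le) (use assms in simp)
qed

lemma J2_sums:
  assumes p: "p > 0"
  shows "(\<lambda>k. (-1) ^ k * ln_sq_laplace (1 + p * real k)) sums J2 p"
proof -
  define F where "F N t = (\<Sum>k<N. (-1) ^ k * (ln t ^ 2 / exp ((1 + p * real k) * t)))" for N t
  have F_geometric: "F N t = ln t ^ 2 / exp t * (\<Sum>k<N. (- exp (- (p * t))) ^ k)" for N t
  proof -
    have "(-1) ^ k * (ln t ^ 2 / exp ((1 + p * real k) * t))
        = ln t ^ 2 / exp t * (- exp (- (p * t))) ^ k" for k
    proof -
      have "exp ((1 + p * real k) * t) = exp t * exp (p * t) ^ k"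
        by (simp add: exp_add[symmetric] exp_of_nat_mult[symmetric] algebra_simps)
      moreover have "(- exp (- (p * t))) ^ k = (-1) ^ k / exp (p * t) ^ k"
        by (subst power_minus) (simp add: exp_minus power_inverse divide_inverse)
      ultimately show ?thesis
        by simp
    qed
    then show ?thesis
      by (simp add: F_def sum_distrib_left)
  qed
  have F_integral: "(F N has_integral (\<Sum>k<N. (-1) ^ k * ln_sq_laplace (1 + p * real k))) {0<..}" for N
    unfolding F_def using p
    by (intro has_integral_sum has_integral_mult_right ln_sq_laplace_has_integral) (auto intro: add_pos_nonneg)
  have "(\<lambda>N. integral {0<..} (F N)) \<longlonglongrightarrow> integral {0<..} (J2_exp_integrand p)"
  proof (rule dominated_convergence(2))
    show "F N integrable_on {0<..}" for N
      using F_integral by blast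
    show "(\<lambda>t::real. ln t ^ 2 / exp t) integrable_on {0<..}"
      using ln_power_exp_has_integral[of 2] by (rule has_integral_integrable)
    fix N and t :: real assume t: "t \<in> {0<..}"
    have r: "0 \<le> exp (- (p * t))" "exp (- (p * t)) \<le> 1"
      using p t by auto
    show "norm (F N t) \<le> ln t ^ 2 / exp t"
      using mult_left_mono[OF abs_sum_neg_power_le_1[OF r, of N], of "ln t ^ 2 / exp t"]
      by (simp add: F_geometric abs_mult)
    have "(\<lambda>N. \<Sum>k<N. (- exp (- (p * t))) ^ k) \<longlonglongrightarrow> 1 / (1 - - exp (- (p * t)))"
      using p t geometric_sums[of "- exp (- (p * t))"] by (simp add: sums_def)
    then have "(\<lambda>N. ln t ^ 2 / exp t * (\<Sum>k<N. (- exp (- (p * t))) ^ k))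
        \<longlonglongrightarrow> ln t ^ 2 / exp t * (1 / (1 - - exp (- (p * t))))"
      by (rule tendsto_mult_left)
    then show "(\<lambda>N. F N t) \<longlonglongrightarrow> J2_exp_integrand p t"
      by (simp add: F_geometric J2_exp_integrand_def)
  qed
  moreover have "integral {0<..} (F N) = (\<Sum>k<N. (-1) ^ k * ln_sq_laplace (1 + p * real k))" for N
    using F_integral by (rule integral_unique)
  ultimately show ?thesis
    using J2_exp_integrand_has_integral[of p] by (simp add: sums_def integral_unique)
qed

lemma ln_sq_laplace_mult:
  assumes "c > 0" "x > 0"
  shows "ln_sq_laplace (c * x) = 1 / c *
    ((euler_mascheroni\<^sup>2 + pi\<^sup>2 / 6 + 2 * euler_mascheroni * ln c + (ln c)\<^sup>2) * (ln x ^ 0 / x)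
     + (2 * euler_mascheroni + 2 * ln c) * (ln x ^ 1 / x) + ln x ^ 2 / x)"
  using assms by (simp add: ln_sq_laplace_def ln_mult field_simps power2_eq_square)

lemma J2_eq_stieltjes:
  assumes p: "p > 0"
  defines "a \<equiv> 1 / (2 * p)" and "b \<equiv> (p + 1) / (2 * p)" and "L \<equiv> ln (2 * p)"
  shows "J2 p = 1 / (2 * p) *
    ((euler_mascheroni\<^sup>2 + pi\<^sup>2 / 6 + 2 * euler_mascheroni * L + L\<^sup>2) * (stieltjes 0 a - stieltjes 0 b)
     + (2 * euler_mascheroni + 2 * L) * (stieltjes 1 a - stieltjes 1 b)
     + (stieltjes 2 a - stieltjes 2 b))"
proof -
  have a: "a > 0" and b: "b > 0"
    using p by (simp_all add: a_def b_def)
  let ?A = "euler_mascheroni\<^sup>2 + pi\<^sup>2 / 6 + 2 * euler_mascheroni * L + L\<^sup>2"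
  let ?B = "2 * euler_mascheroni + 2 * L"
  let ?d = "\<lambda>n m. ln (real m + a) ^ n / (real m + a) - ln (real m + b) ^ n / (real m + b)"
  let ?f = "\<lambda>k. (-1) ^ k * ln_sq_laplace (1 + p * real k)"
  have "(\<lambda>m. sum ?f {m * 2..<m * 2 + 2}) sums J2 p"
    by (rule sums_group[OF J2_sums[OF p]]) simp
  moreover have "sum ?f {m * 2..<m * 2 + 2} = 1 / (2 * p) * (?A * ?d 0 m + ?B * ?d 1 m + ?d 2 m)" for m
  proof -
    have "1 + p * real (m * 2) = (2 * p) * (real m + a)" "1 + p * real (m * 2 + 1) = (2 * p) * (real m + b)"
      using p by (simp_all add: a_def b_def field_simps)
    moreover have "(-1::real) ^ (m * 2) = 1"
      by (simp add: mult.commute[of m] power_mult)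
    ultimately have "sum ?f {m * 2..<m * 2 + 2}
        = ln_sq_laplace (2 * p * (real m + a)) - ln_sq_laplace (2 * p * (real m + b))"
      by (simp add: numeral_2_eq_2 del: of_nat_mult)
    also have "\<dots> = 1 / (2 * p) * (?A * ?d 0 m + ?B * ?d 1 m + ?d 2 m)"
    proof -
      have pos: "2 * p > 0" "real m + a > 0" "real m + b > 0"
        using p a b by simp_all
      show ?thesis
        unfolding ln_sq_laplace_mult[OF pos(1,2)] ln_sq_laplace_mult[OF pos(1,3)]
        by (simp add: L_def algebra_simps)
    qed
    finally show ?thesis .
  qed
  moreover have "(\<lambda>m. 1 / (2 * p) * (?A * ?d 0 m + ?B * ?d 1 m + ?d 2 m)) sums
      (1 / (2 * p) * (?A * (stieltjes 0 a - stieltjes 0 b) + ?B * (stieltjes 1 a - stieltjes 1 b)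
        + (stieltjes 2 a - stieltjes 2 b)))"
    using a b by (intro sums_mult sums_add stieltjes_diff_sums)
  ultimately show ?thesis
    using sums_unique2 by force
qed

lemma hurwitz_zeta_2_1: "hurwitz_zeta 2 1 = pi\<^sup>2 / 6"
proof -
  have "(real n + 1) powr (- 2) = 1 / real ((n + 1)\<^sup>2)" for n
    by (simp add: powr_minus_divide)
  then show ?thesis
    using inverse_squares_sums by (simp add: hurwitz_zeta_def sums_iff)
qed

lemma J2_tendsto_at_top: "(J2 \<longlongrightarrow> euler_mascheroni\<^sup>2 + pi\<^sup>2 / 6) at_top"
proof (rule tendsto_at_topI_sequentially)
  fix X :: "nat \<Rightarrow> real" assume X: "filterlim X at_top sequentially"
  have "(\<lambda>n. integral {0<..} (J2_exp_integrand (X n))) \<longlonglongrightarrow> integral {0<..} (\<lambda>t. ln t ^ 2 / exp t)"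
  proof (rule dominated_convergence(2))
    show "J2_exp_integrand (X n) integrable_on {0<..}" for n
      using J2_exp_integrand_has_integral by blast
    show "(\<lambda>t::real. ln t ^ 2 / exp t) integrable_on {0<..}"
      using ln_power_exp_has_integral[of 2] by (rule has_integral_integrable)
    show "norm (J2_exp_integrand (X n) t) \<le> ln t ^ 2 / exp t" for n t
      using abs_J2_exp_integrand_le by simp
    fix t :: real assume "t \<in> {0<..}"
    then have "filterlim (\<lambda>n. X n * t) at_top sequentially"
      by (intro filterlim_at_top_mult_tendsto_pos[OF tendsto_const _ X]) simp
    then have "filterlim (\<lambda>n. - (X n * t)) at_bot sequentially"
      by (simp add: filterlim_uminus_at_top)
    then have "(\<lambda>n. exp (- (X n * t))) \<longlonglongrightarrow> 0"
      by (rule filterlim_compose[OF exp_at_bot])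
    then have "(\<lambda>n. ln t ^ 2 / exp t / (1 + exp (- (X n * t)))) \<longlonglongrightarrow> ln t ^ 2 / exp t / (1 + 0)"
      by (intro tendsto_divide tendsto_add tendsto_const) auto
    then show "(\<lambda>n. J2_exp_integrand (X n) t) \<longlonglongrightarrow> ln t ^ 2 / exp t"
      by (simp add: J2_exp_integrand_def)
  qed
  moreover have "integral {0<..} (J2_exp_integrand p) = J2 p" for p
    by (rule integral_unique[OF J2_exp_integrand_has_integral])
  moreover have "integral {0<..} (\<lambda>t. ln t ^ 2 / exp t) = euler_mascheroni\<^sup>2 + pi\<^sup>2 / 6"
    using ln_power_exp_has_integral[of 2] unfolding higher_deriv_Gamma_1 by (rule integral_unique)
  ultimately show "(\<lambda>n. J2 (X n)) \<longlonglongrightarrow> euler_mascheroni\<^sup>2 + pi\<^sup>2 / 6"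
    by simp
qed

theorem mainTheorem17:
  shows "(\<forall>p::real. p > 0 \<longrightarrow>
      J2 p =
        1 / (2 * p) * (euler_mascheroni\<^sup>2 + pi\<^sup>2 / 6 + 2 * euler_mascheroni * ln (2 * p)
                       + (ln (2 * p))\<^sup>2)
          * (Digamma ((p + 1) / (2 * p)) - Digamma (1 / (2 * p)))
      + (euler_mascheroni + ln (2 * p)) / p
          * (stieltjes 1 (1 / (2 * p)) - stieltjes 1 ((p + 1) / (2 * p)))
      + 1 / (2 * p) * (stieltjes 2 (1 / (2 * p)) - stieltjes 2 ((p + 1) / (2 * p))))
    \<and> (J2 \<longlongrightarrow> euler_mascheroni\<^sup>2 + hurwitz_zeta 2 1) at_top"
  apply (intro conjI allI impI)
  subgoal for p
    by (simp add: J2_eq_stieltjes stieltjes_0 field_simps)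
  subgoal
    using J2_tendsto_at_top by (simp add: hurwitz_zeta_2_1)
  done

end
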